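(* A reflexive graph $G$ contains an invertible pair if and only if it contains a weak edge-asteroid.
   Context: A graph is reflexive if every vertex carries a loop; its edge set $E(G)$ contains all loops $vv$, and an "edge" $uu'$ may be a loop ($u=u'$). A walk $u_0u_1\dots u_t$ ($t\ge 1$) is a sequence of vertices with $u_ju_{j+1}\in E(G)$ for all $j$ (consecutive vertices may coincide); its edges are $u_ju_{j+1}$. $Z(G)$ is the set of ordered pairs $(u,v)$ of distinct vertices of $G$. For $(u,v),(u',v')\in Z(G)$, $(u,v)$ forces $(u',v')$, written $(u,v)\Lambda(u',v')$, if either $u=u'$ and $v=v'$, or $uu'\in E(G)$, $vv'\in E(G)$, $uv'\notin E(G)$ and $vu'\notin E(G)$. We write $(u,v)\sim(u',v')$ if there are walks $w_1\dots w_m$ and $z_1\dots z_m$ in $G$ with $(w_1,z_1)=(u,v)$, $(w_m,z_m)=(u',v')$ and $(w_j,z_j)\Lambda(w_{j+1},z_{j+1})$ for all $j$. An invertible pair is a pair of distinct vertices $u,v$ with $(u,v)\sim(v,u)$. For edges $uu'$, $vv'$ of $G$ with $\{u,u'\}\cap\{v,v'\}=\emptyset$, $uu'$ avoids $vv'$ if one of the following holds: (i) $u=u'$, $v=v'$, $uv\notin E(G)$; (ii) $u=u'$, $v\ne v'$, $uv\notin E(G)$ and $uv'\notin E(G)$; (iii) $u\ne u'$, $v=v'$, $uv\notin E(G)$ and $u'v\notin E(G)$; (iv) $u\ne u'$, $v\ne v'$, and $\{u,u',v,v'\}$ induces a $2K_2$, a $P_4$, or a $C_4$ in $G$. An edge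 avoids a walk if it avoids every edge of the walk. A weak edge-asteroid is a set of edges $x_0y_0,\dots,x_{2k}y_{2k}$ ($k\ge1$) such that for each $i$, $x_iy_i$ avoids some walk whose first edge is $x_{i+k}y_{i+k}$ and whose last edge is $x_{i+k+1}y_{i+k+1}$ (subscripts modulo $2k+1$). *)

theory Defs
  imports Main
begin

definition reflexive_graph :: "'a set \<Rightarrow> ('a \<Rightarrow> 'a \<Rightarrow> bool) \<Rightarrow> bool" where
  "reflexive_graph V E \<longleftrightarrow>
     (\<forall>u v. E u v \<longrightarrow> u \<in> V \<and> v \<in> V) \<and>
     (\<forall>u v. E u v \<longrightarrow> E v u) \<and>
     (\<forall>v\<in>V. E v v)"

definition is_walk :: "'a set \<Rightarrow> ('a \<Rightarrow> 'a \<Rightarrow> bool) \<Rightarrow> 'a list \<Rightarrow> bool" where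
  "is_walk V E w \<longleftrightarrow> length w \<ge> 2 \<and> set w \<subseteq> V \<and>
     (\<forall>j. Suc j < length w \<longrightarrow> E (w ! j) (w ! Suc j))"

definition Zset :: "'a set \<Rightarrow> ('a \<times> 'a) set" where
  "Zset V = {(u, v). u \<in> V \<and> v \<in> V \<and> u \<noteq> v}"

definition forces :: "('a \<Rightarrow> 'a \<Rightarrow> bool) \<Rightarrow> 'a \<times> 'a \<Rightarrow> 'a \<times> 'a \<Rightarrow> bool" where
  "forces E p q \<longleftrightarrow> (case p of (u, v) \<Rightarrow> case q of (u', v') \<Rightarrow>
      (u = u' \<and> v = v') \<or> (E u u' \<and> E v v' \<and> \<not> E u v' \<and> \<not> E v u'))"

definition pair_sim :: "'a set \<Rightarrow> ('a \<Rightarrow> 'a \<Rightarrow> bool) \<Rightarrow> 'a \<times> 'a \<Rightarrow> 'a \<times> 'a \<Rightarrow> bool" where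
  "pair_sim V E p q \<longleftrightarrow> (\<exists>ws zs.
      is_walk V E ws \<and> is_walk V E zs \<and> length ws = length zs \<and>
      (\<forall>j < length ws. (ws ! j, zs ! j) \<in> Zset V) \<and>
      (hd ws, hd zs) = p \<and> (last ws, last zs) = q \<and>
      (\<forall>j. Suc j < length ws \<longrightarrow> forces E (ws ! j, zs ! j) (ws ! Suc j, zs ! Suc j)))"

definition has_invertible_pair :: "'a set \<Rightarrow> ('a \<Rightarrow> 'a \<Rightarrow> bool) \<Rightarrow> bool" where
  "has_invertible_pair V E \<longleftrightarrow>
     (\<exists>u v. u \<in> V \<and> v \<in> V \<and> u \<noteq> v \<and> pair_sim V E (u, v) (v, u))"

definition induces :: "('a \<Rightarrow> 'a \<Rightarrow> bool) \<Rightarrow> 'a set \<Rightarrow> nat \<Rightarrow> (nat \<Rightarrow> nat \<Rightarrow> bool) \<Rightarrow> bool" where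
  "induces E S n H \<longleftrightarrow> (\<exists>f. bij_betw f {..<n} S \<and>
     (\<forall>i<n. \<forall>j<n. i \<noteq> j \<longrightarrow> (E (f i) (f j) \<longleftrightarrow> H i j)))"

definition twoK2 :: "nat \<Rightarrow> nat \<Rightarrow> bool" where
  "twoK2 i j \<longleftrightarrow> {i, j} = {0, 1} \<or> {i, j} = {2, 3}"

definition P4 :: "nat \<Rightarrow> nat \<Rightarrow> bool" where
  "P4 i j \<longleftrightarrow> {i, j} = {0, 1} \<or> {i, j} = {1, 2} \<or> {i, j} = {2, 3}"

definition C4 :: "nat \<Rightarrow> nat \<Rightarrow> bool" where
  "C4 i j \<longleftrightarrow> {i, j} = {0, 1} \<or> {i, j} = {1, 2} \<or> {i, j} = {2, 3} \<or> {i, j} = {3, 0}"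

definition edge_avoids :: "('a \<Rightarrow> 'a \<Rightarrow> bool) \<Rightarrow> 'a \<times> 'a \<Rightarrow> 'a \<times> 'a \<Rightarrow> bool" where
  "edge_avoids E e f \<longleftrightarrow> (case e of (u, u') \<Rightarrow> case f of (v, v') \<Rightarrow>
     E u u' \<and> E v v' \<and> {u, u'} \<inter> {v, v'} = {} \<and>
     ((u = u' \<and> v = v' \<and> \<not> E u v) \<or>
      (u = u' \<and> v \<noteq> v' \<and> \<not> E u v \<and> \<not> E u v') \<or>
      (u \<noteq> u' \<and> v = v' \<and> \<not> E u v \<and> \<not> E u' v) \<or>
      (u \<noteq> u' \<and> v \<noteq> v' \<and>
        (induces E {u, u', v, v'} 4 twoK2 \<or> induces E {u, u', v, v'} 4 P4 \<or>
         induces E {u, u', v, v'} 4 C4))))"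

definition edge_avoids_walk :: "('a \<Rightarrow> 'a \<Rightarrow> bool) \<Rightarrow> 'a \<times> 'a \<Rightarrow> 'a list \<Rightarrow> bool" where
  "edge_avoids_walk E e w \<longleftrightarrow>
     (\<forall>j. Suc j < length w \<longrightarrow> edge_avoids E e (w ! j, w ! Suc j))"

definition weak_edge_asteroid :: "'a set \<Rightarrow> ('a \<Rightarrow> 'a \<Rightarrow> bool) \<Rightarrow> nat \<Rightarrow> (nat \<Rightarrow> 'a) \<Rightarrow> (nat \<Rightarrow> 'a) \<Rightarrow> bool" where
  "weak_edge_asteroid V E k x y \<longleftrightarrow> k \<ge> 1 \<and>
     (\<forall>i \<le> 2 * k. E (x i) (y i)) \<and>
     (\<forall>i \<le> 2 * k. \<exists>w. is_walk V E w \<and>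
        {w ! 0, w ! 1} = {x ((i + k) mod (2 * k + 1)), y ((i + k) mod (2 * k + 1))} \<and>
        {w ! (length w - 2), w ! (length w - 1)} =
          {x ((i + k + 1) mod (2 * k + 1)), y ((i + k + 1) mod (2 * k + 1))} \<and>
        edge_avoids_walk E (x i, y i) w)"

definition has_weak_edge_asteroid :: "'a set \<Rightarrow> ('a \<Rightarrow> 'a \<Rightarrow> bool) \<Rightarrow> bool" where
  "has_weak_edge_asteroid V E \<longleftrightarrow> (\<exists>k x y. weak_edge_asteroid V E k x y)"

end

theory Submission
  imports Defs
begin

text \<open>The relation \<open>\<sim>\<close> is the reflexive-transitive closure of proper one-step forcing
  between pairs of distinct vertices; this relation is symmetric and commutes with swapping
  both pairs.

  If \<open>(u, v) \<sim> (v, u)\<close> by a chain of length \<open>m\<close>, that chain followed by its swap is a closed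
  forcing chain \<open>(s\<^sub>j, s\<^sub>j\<^sub>+\<^sub>m)\<close>, \<open>j < 2 m\<close>. Each step of it makes \<open>s\<^sub>j s\<^sub>j\<^sub>+\<^sub>1\<close>
  avoid the opposite edge \<open>s\<^sub>j\<^sub>+\<^sub>m s\<^sub>j\<^sub>+\<^sub>m\<^sub>+\<^sub>1\<close>, and two consecutive steps make it avoid
  \<open>s\<^sub>j\<^sub>+\<^sub>m\<^sub>-\<^sub>1 s\<^sub>j\<^sub>+\<^sub>m\<close>, so these \<open>2 m\<close> edges, one of them doubled, form a weak
  edge-asteroid.

  Conversely, if \<open>xy\<close> avoids \<open>qq'\<close> then the adjacencies between \<open>{x, y}\<close> and \<open>{q, q'}\<close>
  form a matching, so all pairs \<open>(a, b)\<close> across the two edges in which \<open>a\<close> is the only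
  possible neighbour of \<open>b\<close> (or vice versa) are \<open>\<sim>\<close>-equivalent. Chaining this along the walk
  avoided by \<open>x\<^sub>iy\<^sub>i\<close> relates a pair at edge \<open>i\<close> to the swap of a pair at edge \<open>i + k + 1\<close>.
  Stepping around the asteroid by \<open>k + 1\<close> returns to the start after the odd number \<open>2 k + 1\<close> of
  steps, so the initial pair is related to its own swap.\<close>

lemma reflexive_graph_sym: "reflexive_graph V E \<Longrightarrow> E a b \<Longrightarrow> E b a"
  unfolding reflexive_graph_def by blast

lemma reflexive_graph_refl: "reflexive_graph V E \<Longrightarrow> a \<in> V \<Longrightarrow> E a a"
  unfolding reflexive_graph_def by blast

lemma reflexive_graph_edge_vertices: "reflexive_graph V E \<Longrightarrow> E a b \<Longrightarrow> a \<in> V \<and> b \<in> V"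
  unfolding reflexive_graph_def by blast

lemma is_walk_2: "reflexive_graph V E \<Longrightarrow> E a b \<Longrightarrow> is_walk V E [a, b]"
  by (auto simp: is_walk_def less_Suc_eq dest: reflexive_graph_edge_vertices)

lemma is_walk_3: "reflexive_graph V E \<Longrightarrow> E a b \<Longrightarrow> E b c \<Longrightarrow> is_walk V E [a, b, c]"
  by (auto simp: is_walk_def less_Suc_eq nth_Cons split: nat.splits dest: reflexive_graph_edge_vertices)

lemma edge_avoids_walk_2: "edge_avoids_walk E e [a, b] \<longleftrightarrow> edge_avoids E e (a, b)"
  by (simp add: edge_avoids_walk_def)

lemma edge_avoids_walk_3:
  "edge_avoids_walk E e [a, b, c] \<longleftrightarrow> edge_avoids E e (a, b) \<and> edge_avoids E e (b, c)"
  by (auto simp: edge_avoids_walk_def less_Suc_eq)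

lemma edge_avoids_walk_nth:
  "edge_avoids_walk E e w \<Longrightarrow> Suc j < length w \<Longrightarrow> edge_avoids E e (w ! j, w ! Suc j)"
  by (simp add: edge_avoids_walk_def)

section \<open>Forcing\<close>

definition forcing :: "'a set \<Rightarrow> ('a \<Rightarrow> 'a \<Rightarrow> bool) \<Rightarrow> (('a \<times> 'a) \<times> ('a \<times> 'a)) set" where
  "forcing V E = {((u, v), (u', v')). (u, v) \<in> Zset V \<and> (u', v') \<in> Zset V \<and>
     E u u' \<and> E v v' \<and> \<not> E u v' \<and> \<not> E v u'}"

lemma forcing_iff:
  "((u, v), (u', v')) \<in> forcing V E \<longleftrightarrow> u \<in> V \<and> v \<in> V \<and> u \<noteq> v \<and> u' \<in> V \<and> v' \<in> V \<and> u' \<noteq> v' \<and>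
     E u u' \<and> E v v' \<and> \<not> E u v' \<and> \<not> E v u'"
  by (simp add: forcing_def Zset_def)

lemma sym_forcing: "reflexive_graph V E \<Longrightarrow> sym (forcing V E)"
  by (auto simp: sym_def forcing_def dest: reflexive_graph_sym)

lemma forcing_swap: "(p, q) \<in> forcing V E \<Longrightarrow> (prod.swap p, prod.swap q) \<in> forcing V E"
  by (auto simp: forcing_def Zset_def)

lemma rtrancl_forcing_swap:
  "(p, q) \<in> (forcing V E)\<^sup>* \<Longrightarrow> (prod.swap p, prod.swap q) \<in> (forcing V E)\<^sup>*"
  by (induction rule: rtrancl_induct) (auto intro: rtrancl_into_rtrancl forcing_swap)

lemma rtrancl_forcing_sym:
  "reflexive_graph V E \<Longrightarrow> (p, q) \<in> (forcing V E)\<^sup>* \<Longrightarrow> (q, p) \<in> (forcing V E)\<^sup>*"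
  using sym_rtrancl[OF sym_forcing] by (auto dest: symD)

lemma rtrancl_chain:
  assumes "\<And>i. i < n \<Longrightarrow> (f i, f (Suc i)) \<in> R\<^sup>*"
  shows "(f 0, f n) \<in> R\<^sup>*"
  using assms by (induction n) (auto intro: rtrancl_trans)

lemma pair_sim_imp_rtrancl_forcing:
  assumes "pair_sim V E p q"
  shows "(p, q) \<in> (forcing V E)\<^sup>*"
proof -
  obtain ws zs where walks: "is_walk V E ws" "length ws = length zs"
    and Z: "\<forall>j < length ws. (ws ! j, zs ! j) \<in> Zset V"
    and ends: "(hd ws, hd zs) = p" "(last ws, last zs) = q"
    and forced: "\<forall>j. Suc j < length ws \<longrightarrow> forces E (ws ! j, zs ! j) (ws ! Suc j, zs ! Suc j)"
    using assms unfolding pair_sim_def by blast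
  define n where "n = length ws - 1"
  have n: "length ws = Suc n" "length zs = Suc n"
    using walks by (auto simp: n_def is_walk_def)
  have "((ws ! i, zs ! i), (ws ! Suc i, zs ! Suc i)) \<in> (forcing V E)\<^sup>*" if "i < n" for i
    using forced Z that n by (fastforce simp: forces_def forcing_def)
  then have "((ws ! 0, zs ! 0), (ws ! n, zs ! n)) \<in> (forcing V E)\<^sup>*"
    by (rule rtrancl_chain[where f = "\<lambda>i. (ws ! i, zs ! i)"])
  moreover have "ws \<noteq> []" "zs \<noteq> []" using n by auto
  ultimately show ?thesis
    using ends n by (simp add: hd_conv_nth last_conv_nth)
qed

lemma is_walk_map_upt:
  assumes "2 \<le> l" "\<And>j. g j \<in> V" "\<And>j. E (g j) (g (Suc j))"
  shows "is_walk V E (map g [0..<l])"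
  using assms by (auto simp: is_walk_def)

lemma rtrancl_forcing_imp_pair_sim:
  assumes rg: "reflexive_graph V E" and p: "p \<in> Zset V" and pq: "(p, q) \<in> (forcing V E)\<^sup>*"
  shows "pair_sim V E p q"
proof -
  obtain n f where f: "f 0 = p" "f n = q" "\<forall>i<n. (f i, f (Suc i)) \<in> forcing V E"
    using pq by (auto simp: rtrancl_power relpow_fun_conv)
  \<comment> \<open>the end pair is repeated once, as a walk has at least two vertices\<close>
  define h where "h j = f (min j n)" for j
  have f_Z: "f i \<in> Zset V" if "i \<le> n" for i
  proof (cases i)
    case (Suc i')
    then have "(f i', f i) \<in> forcing V E" using f(3) that by simp
    then show ?thesis by (auto simp: forcing_def)
  qed (use f p in simp)
  have h_Z: "h j \<in> Zset V" for j
    using f_Z by (simp add: h_def)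
  have h_V: "fst (h j) \<in> V" "snd (h j) \<in> V" for j
    using h_Z[of j] by (auto simp: Zset_def)
  have h_step: "(h j, h (Suc j)) \<in> forcing V E \<or> h (Suc j) = h j" for j
    using f(3) by (cases "j < n") (auto simp: h_def min_def)
  have h_edges: "E (fst (h j)) (fst (h (Suc j))) \<and> E (snd (h j)) (snd (h (Suc j)))" for j
    using h_step[of j] h_Z[of j] reflexive_graph_refl[OF rg]
    by (auto simp: forcing_def Zset_def split: prod.splits)
  define ws where "ws = map (fst \<circ> h) [0..<n+2]"
  define zs where "zs = map (snd \<circ> h) [0..<n+2]"
  have walks: "is_walk V E ws" "is_walk V E zs"
    unfolding ws_def zs_def using h_V h_edges by (intro is_walk_map_upt; simp)+
  have nth: "(ws ! j, zs ! j) = h j" if "j < n + 2" for j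
    using that by (simp add: ws_def zs_def del: upt_Suc)
  have forced: "forces E (h j) (h (Suc j))" for j
    using h_step[of j] by (auto simp: forces_def forcing_def split: prod.splits)
  have ends: "(hd ws, hd zs) = p" "(last ws, last zs) = q"
    using f by (simp_all add: ws_def zs_def h_def hd_map last_map del: upt_Suc)
  show ?thesis
    unfolding pair_sim_def
    by (rule exI[of _ ws], rule exI[of _ zs])
      (use walks nth h_Z forced ends in \<open>simp add: ws_def zs_def del: upt_Suc\<close>)
qed

lemma pair_sim_iff_rtrancl_forcing:
  "reflexive_graph V E \<Longrightarrow> p \<in> Zset V \<Longrightarrow> pair_sim V E p q \<longleftrightarrow> (p, q) \<in> (forcing V E)\<^sup>*"
  using pair_sim_imp_rtrancl_forcing rtrancl_forcing_imp_pair_sim by blast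

section \<open>Avoiding edges\<close>

lemma edge_avoids_commute:
  assumes "reflexive_graph V E"
  shows "edge_avoids E e f \<longleftrightarrow> edge_avoids E f e"
  using reflexive_graph_sym[OF assms]
  unfolding edge_avoids_def by (auto split: prod.splits simp: insert_commute)

lemma edge_avoids_flip:
  assumes "reflexive_graph V E"
  shows "edge_avoids E e (q, q') \<longleftrightarrow> edge_avoids E e (q', q)"
  using reflexive_graph_sym[OF assms]
  unfolding edge_avoids_def by (auto split: prod.splits simp: insert_commute)

lemma induces_4I:
  assumes "distinct [a, b, c, d]"
    and "\<forall>i<4. \<forall>j<4. i \<noteq> j \<longrightarrow> (E ([a, b, c, d] ! i) ([a, b, c, d] ! j) \<longleftrightarrow> H i j)"
  shows "induces E {a, b, c, d} 4 H"
  unfolding induces_def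
  using bij_betw_nth[OF assms(1), of "{..<4}" "{a, b, c, d}"] assms(2)
  by (intro exI[of _ "\<lambda>i. [a, b, c, d] ! i"]) simp

lemma all_less_4: "(\<forall>i<(4::nat). P i) \<longleftrightarrow> P 0 \<and> P 1 \<and> P 2 \<and> P 3"
  by (auto simp: numeral_eq_Suc less_Suc_eq)

lemma ex_less_4: "(\<exists>i<(4::nat). P i) \<longleftrightarrow> P 0 \<or> P 1 \<or> P 2 \<or> P 3"
  by (auto simp: numeral_eq_Suc less_Suc_eq)

lemma edge_avoids_of_forcing:
  assumes rg: "reflexive_graph V E" and pq: "((p, q), (p', q')) \<in> forcing V E"
  shows "edge_avoids E (p, p') (q, q')"
proof -
  have sym: "E a b \<longleftrightarrow> E b a" for a b using reflexive_graph_sym[OF rg] by blast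
  have V: "p \<in> V" "p' \<in> V" "q \<in> V" "q' \<in> V" and ne: "p \<noteq> q" "p' \<noteq> q'"
    and edges: "E p p'" "E q q'" and non: "\<not> E p q'" "\<not> E q p'"
    using pq by (auto simp: forcing_iff)
  have "p \<noteq> q'" "p' \<noteq> q" using non V reflexive_graph_refl[OF rg] by auto
  then have disj: "{p, p'} \<inter> {q, q'} = {}" using ne by auto
  have pattern: "induces E {p, p', q, q'} 4 twoK2 \<or> induces E {p, p', q, q'} 4 P4 \<or>
      induces E {p, p', q, q'} 4 C4" if "p \<noteq> p'" "q \<noteq> q'"
  proof -
    have dist: "distinct [p, p', q, q']" "distinct [p', p, q, q']" "distinct [p, p', q', q]"
      using that disj by auto
    have perm: "{p', p, q, q'} = {p, p', q, q'}" "{p, p', q', q} = {p, p', q, q'}" by auto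
    consider "E p q" "E p' q'" | "E p q" "\<not> E p' q'" | "\<not> E p q" "E p' q'" | "\<not> E p q" "\<not> E p' q'"
      by blast
    then show ?thesis
    proof cases
      case 1
      have "induces E {p, p', q', q} 4 C4"
        using 1 edges non sym
        by (intro induces_4I[OF dist(3)]) (simp add: all_less_4 C4_def doubleton_eq_iff)
      then show ?thesis by (simp add: perm)
    next
      case 2
      have "induces E {p', p, q, q'} 4 P4"
        using 2 edges non sym
        by (intro induces_4I[OF dist(2)]) (simp add: all_less_4 P4_def doubleton_eq_iff)
      then show ?thesis by (simp add: perm)
    next
      case 3
      have "induces E {p, p', q', q} 4 P4"
        using 3 edges non sym
        by (intro induces_4I[OF dist(3)]) (simp add: all_less_4 P4_def doubleton_eq_iff)
      then show ?thesis by (simp add: perm)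
    next
      case 4
      have "induces E {p, p', q, q'} 4 twoK2"
        using 4 edges non sym
        by (intro induces_4I[OF dist(1)]) (simp add: all_less_4 twoK2_def doubleton_eq_iff)
      then show ?thesis by simp
    qed
  qed
  show ?thesis
    unfolding edge_avoids_def using edges disj non sym pattern by auto
qed

lemma edge_avoids_of_nonadjacent:
  assumes rg: "reflexive_graph V E" and "E p p'" "E q q'" "\<not> E p q" "\<not> E p' q'"
  shows "edge_avoids E (p, p') (q, q')"
proof -
  have "p \<in> V" "p' \<in> V" "q \<in> V" "q' \<in> V"
    using assms(2,3) reflexive_graph_edge_vertices[OF rg] by blast+
  then have "((p, q'), (p', q)) \<in> forcing V E"
    using assms reflexive_graph_refl[OF rg] reflexive_graph_sym[OF rg] by (auto simp: forcing_iff)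
  then show ?thesis
    using edge_avoids_of_forcing[OF rg] edge_avoids_flip[OF rg] by blast
qed

lemma induces_no_dominating_vertex:
  assumes "induces E S 4 H" "\<forall>i<4. \<exists>j<4. j \<noteq> i \<and> \<not> H i j" "z \<in> S"
  shows "\<exists>w\<in>S. w \<noteq> z \<and> \<not> E z w"
proof -
  obtain f where f: "bij_betw f {..<4} S" "\<forall>i<4. \<forall>j<4. i \<noteq> j \<longrightarrow> (E (f i) (f j) \<longleftrightarrow> H i j)"
    using assms(1) unfolding induces_def by blast
  obtain i where i: "i < 4" "z = f i" using f(1) assms(3) unfolding bij_betw_def by auto
  obtain j where j: "j < 4" "j \<noteq> i" "\<not> H i j" using assms(2) i(1) by blast
  have "f j \<in> S" "f j \<noteq> f i"
    using f(1) i(1) j(1,2) unfolding bij_betw_def inj_on_def by auto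
  then show ?thesis using f(2) i j by auto
qed

text \<open>In each of the three patterns of case (iv) every vertex has a non-neighbour.\<close>

lemma edge_avoids_cross_adjacency:
  assumes rg: "reflexive_graph V E" and av: "edge_avoids E (x, y) (q, q')"
  shows "\<not> (E x q \<and> E x q')" "\<not> (E y q \<and> E y q')" "\<not> (E x q \<and> E y q)" "\<not> (E x q' \<and> E y q')"
proof -
  have sym: "E a b \<longleftrightarrow> E b a" for a b using reflexive_graph_sym[OF rg] by blast
  have edges: "E x y" "E q q'" using av by (auto simp: edge_avoids_def)
  have no_dominating: "\<exists>w\<in>{x, y, q, q'}. w \<noteq> z \<and> \<not> E z w"
    if "z \<in> {x, y, q, q'}" "x \<noteq> y" "q \<noteq> q'" for z
  proof -
    have non_universal: "\<forall>i<4. \<exists>j<4. j \<noteq> i \<and> \<not> twoK2 i j"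
      "\<forall>i<4. \<exists>j<4. j \<noteq> i \<and> \<not> P4 i j" "\<forall>i<4. \<exists>j<4. j \<noteq> i \<and> \<not> C4 i j"
      by (simp_all add: all_less_4 ex_less_4 twoK2_def P4_def C4_def doubleton_eq_iff)
    show ?thesis
      using av that non_universal induces_no_dominating_vertex[of E "{x, y, q, q'}" _ z]
      unfolding edge_avoids_def by auto
  qed
  show "\<not> (E x q \<and> E x q')" "\<not> (E y q \<and> E y q')" "\<not> (E x q \<and> E y q)" "\<not> (E x q' \<and> E y q')"
    using av no_dominating edges sym unfolding edge_avoids_def by (auto 4 3)
qed

section \<open>From an invertible pair to a weak edge-asteroid\<close>

text \<open>\<open>pair\<close> is the chain followed by its swapped copy, continued periodically; its
  \<open>j\<close>-th entry is \<open>(s\<^sub>j, s\<^sub>j\<^sub>+\<^sub>m)\<close> with \<open>s\<^sub>j = vertex j\<close>.\<close>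

locale swap_chain =
  fixes V :: "'a set" and E :: "'a \<Rightarrow> 'a \<Rightarrow> bool" and m :: nat and f :: "nat \<Rightarrow> 'a \<times> 'a"
  assumes rg: "reflexive_graph V E" and m_pos: "0 < m"
    and chain: "\<And>i. i < m \<Longrightarrow> (f i, f (Suc i)) \<in> forcing V E"
    and ends: "f m = prod.swap (f 0)"
begin

definition pair :: "nat \<Rightarrow> 'a \<times> 'a" where
  "pair j = (if j mod (2 * m) < m then f (j mod (2 * m)) else prod.swap (f (j mod (2 * m) - m)))"

lemma forcing_pair_Suc: "(pair j, pair (Suc j)) \<in> forcing V E"
proof -
  define r where "r = j mod (2 * m)"
  have r: "r < 2 * m" using m_pos by (simp add: r_def)
  have r_Suc: "Suc j mod (2 * m) = (if Suc r = 2 * m then 0 else Suc r)"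
    by (simp add: r_def mod_Suc)
  consider "Suc r < m" | "Suc r = m" | "m \<le> r" "Suc r < 2 * m" | "Suc r = 2 * m"
    using r by linarith
  then show ?thesis
  proof cases
    case 1
    then show ?thesis using chain r_Suc by (simp add: pair_def r_def[symmetric])
  next
    case 2
    then show ?thesis using chain[of r] ends r_Suc m_pos by (simp add: pair_def r_def[symmetric])
  next
    case 3
    have "(prod.swap (f (r - m)), prod.swap (f (Suc (r - m)))) \<in> forcing V E"
      using 3 by (intro forcing_swap chain) linarith
    then show ?thesis using 3 r_Suc by (simp add: pair_def r_def[symmetric] Suc_diff_le)
  next
    case 4
    then have "(prod.swap (f (m - 1)), prod.swap (f m)) \<in> forcing V E"
      using chain[of "m - 1"] forcing_swap m_pos by simp
    moreover have "r - m = m - 1" using 4 by simp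
    ultimately show ?thesis using 4 r_Suc ends m_pos by (simp add: pair_def r_def[symmetric])
  qed
qed

lemma pair_add_m: "pair (j + m) = prod.swap (pair j)"
proof -
  define r where "r = j mod (2 * m)"
  have r: "r < 2 * m" using m_pos by (simp add: r_def)
  have "(j + m) mod (2 * m) = (r + m) mod (2 * m)"
    by (simp add: r_def mod_add_left_eq)
  also have "\<dots> = (if r < m then r + m else r - m)"
    using r by (simp add: mod_if)
  finally show ?thesis
    using r unfolding pair_def r_def[symmetric] by auto
qed

definition vertex :: "nat \<Rightarrow> 'a" where
  "vertex j = fst (pair j)"

lemma pair_eq: "pair j = (vertex j, vertex (j + m))"
  by (simp add: vertex_def pair_add_m)

lemma forcing_vertex_Suc:
  "((vertex j, vertex (j + m)), (vertex (Suc j), vertex (Suc (j + m)))) \<in> forcing V E"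
  using forcing_pair_Suc[of j] by (simp add: pair_eq)

lemma vertex_add_2m: "vertex (j + 2 * m) = vertex j"
  by (simp add: vertex_def pair_def)

lemma edge_vertex_Suc: "E (vertex j) (vertex (Suc j))"
  using forcing_vertex_Suc[of j] by (simp add: forcing_iff)

lemma edge_avoids_opposite:
  "edge_avoids E (vertex j, vertex (Suc j)) (vertex (j + m), vertex (Suc (j + m)))"
  using edge_avoids_of_forcing[OF rg forcing_vertex_Suc] .

lemma edge_avoids_opposite_Suc:
  "edge_avoids E (vertex (Suc j), vertex (Suc (Suc j))) (vertex (j + m), vertex (Suc (j + m)))"
  using forcing_vertex_Suc[of j] forcing_vertex_Suc[of "Suc j"] reflexive_graph_sym[OF rg]
  by (intro edge_avoids_of_nonadjacent[OF rg]) (auto simp: forcing_iff)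

text \<open>Index \<open>m\<close> is hit twice, so the edge \<open>s\<^sub>m s\<^sub>m\<^sub>+\<^sub>1\<close> occurs twice among the
  \<open>2 m + 1\<close> edges of the asteroid.\<close>

definition start :: "nat \<Rightarrow> nat" where
  "start i = (if i \<le> m then i else i - 1)"

lemma weak_edge_asteroid_chain_edges: "weak_edge_asteroid V E m (vertex \<circ> start) (vertex \<circ> Suc \<circ> start)"
  unfolding weak_edge_asteroid_def
proof (intro conjI allI impI)
  show "1 \<le> m" using m_pos by simp
next
  fix i show "E ((vertex \<circ> start) i) ((vertex \<circ> Suc \<circ> start) i)" by (simp add: edge_vertex_Suc)
next
  fix i assume i: "i \<le> 2 * m"
  let ?a = "(i + m) mod (2 * m + 1)" and ?b = "(i + m + 1) mod (2 * m + 1)"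
  let ?x = "vertex \<circ> start" and ?y = "vertex \<circ> Suc \<circ> start"
  have a: "?a = (if i \<le> m then i + m else i - m - 1)" and b: "?b = (if i < m then i + m + 1 else i - m)"
    using i by (auto simp: mod_if)
  show "\<exists>w. is_walk V E w \<and> {w ! 0, w ! 1} = {?x ?a, ?y ?a} \<and>
      {w ! (length w - 2), w ! (length w - 1)} = {?x ?b, ?y ?b} \<and> edge_avoids_walk E (?x i, ?y i) w"
  proof (cases "i = 0")
    case True
    then show ?thesis
      using a b m_pos is_walk_2[OF rg edge_vertex_Suc[of m]] edge_avoids_opposite[of 0]
      by (intro exI[of _ "[vertex m, vertex (Suc m)]"]) (simp add: start_def edge_avoids_walk_2)
  next
    case False
    show ?thesis
    proof (cases "i \<le> m")
      case True
      define w where "w = [vertex (i + m - 1), vertex (i + m), vertex (Suc (i + m))]"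
      have "is_walk V E w"
        using is_walk_3[OF rg edge_vertex_Suc[of "i + m - 1"]] edge_vertex_Suc[of "i + m"] m_pos
        by (simp add: w_def)
      moreover have "edge_avoids_walk E (?x i, ?y i) w"
        using edge_avoids_opposite_Suc[of "i - 1"] edge_avoids_opposite[of i] True \<open>i \<noteq> 0\<close>
        by (simp add: w_def edge_avoids_walk_3 start_def Suc_diff_Suc)
      moreover have "{?x ?b, ?y ?b} = {vertex (i + m), vertex (Suc (i + m))}"
        using b True \<open>i \<noteq> 0\<close> vertex_add_2m[of 0] vertex_add_2m[of 1]
        by (cases "i < m") (auto simp: start_def mult_2)
      ultimately show ?thesis
        using a True \<open>i \<noteq> 0\<close> by (intro exI[of _ w]) (simp add: w_def start_def)
    next
      case False
      define j where "j = i - m - 1"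
      have j: "i = Suc (j + m)" "j < m" using False i by (auto simp: j_def)
      define w where "w = [vertex j, vertex (Suc j), vertex (Suc (Suc j))]"
      have "is_walk V E w"
        using is_walk_3[OF rg edge_vertex_Suc edge_vertex_Suc] by (simp add: w_def)
      moreover have "edge_avoids_walk E (?x i, ?y i) w"
        using edge_avoids_opposite[of j] edge_avoids_opposite_Suc[of j] edge_avoids_commute[OF rg] j
        by (simp add: w_def edge_avoids_walk_3 start_def)
      ultimately show ?thesis
        using a b j by (intro exI[of _ w]) (simp add: w_def start_def)
    qed
  qed
qed

end

lemma invertible_pair_imp_weak_edge_asteroid:
  assumes rg: "reflexive_graph V E" and "has_invertible_pair V E"
  shows "has_weak_edge_asteroid V E"
proof -
  obtain u v where uv: "(u, v) \<in> Zset V" "pair_sim V E (u, v) (v, u)"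
    using assms(2) by (auto simp: has_invertible_pair_def Zset_def)
  then have "((u, v), (v, u)) \<in> (forcing V E)\<^sup>*"
    using pair_sim_iff_rtrancl_forcing[OF rg] by blast
  then obtain m f where f: "f 0 = (u, v)" "f m = (v, u)" "\<And>i. i < m \<Longrightarrow> (f i, f (Suc i)) \<in> forcing V E"
    by (auto simp: rtrancl_power relpow_fun_conv)
  have "u \<noteq> v" using uv(1) by (simp add: Zset_def)
  then have "0 < m" using f(1,2) by (cases m) auto
  then interpret swap_chain V E m f
    using rg f by unfold_locales auto
  show ?thesis
    using weak_edge_asteroid_chain_edges unfolding has_weak_edge_asteroid_def by blast
qed

section \<open>From a weak edge-asteroid to an invertible pair\<close>

text \<open>In \<open>only_nbr_in E X a b\<close>, \<open>a\<close> need not itself be adjacent to \<open>b\<close>.\<close>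

definition only_nbr_in :: "('a \<Rightarrow> 'a \<Rightarrow> bool) \<Rightarrow> 'a set \<Rightarrow> 'a \<Rightarrow> 'a \<Rightarrow> bool" where
  "only_nbr_in E X a b \<longleftrightarrow> a \<in> X \<and> (\<forall>a'\<in>X. E a' b \<longrightarrow> a' = a)"

definition linked_pairs :: "('a \<Rightarrow> 'a \<Rightarrow> bool) \<Rightarrow> 'a set \<Rightarrow> 'a set \<Rightarrow> ('a \<times> 'a) set" where
  "linked_pairs E X Y =
     {(a, b). (b \<in> Y \<and> only_nbr_in E X a b) \<or> (a \<in> X \<and> only_nbr_in E Y b a)}"

lemma linked_pairs_subset: "linked_pairs E X Y \<subseteq> X \<times> Y"
  by (auto simp: linked_pairs_def only_nbr_in_def)

lemma forcing_between_edges: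
  assumes rg: "reflexive_graph V E" and edges: "E x y" "E q q'" and disj: "{x, y} \<inter> {q, q'} = {}"
    and "a \<in> {x, y}" "a' \<in> {x, y}" "b \<in> {q, q'}" "b' \<in> {q, q'}" "\<not> E a b'" "\<not> E b a'"
  shows "((a, b), (a', b')) \<in> forcing V E"
proof -
  have "x \<in> V" "y \<in> V" "q \<in> V" "q' \<in> V"
    using edges reflexive_graph_edge_vertices[OF rg] by blast+
  then show ?thesis
    using assms reflexive_graph_refl[OF rg] reflexive_graph_sym[OF rg] by (auto simp: forcing_iff)
qed

text \<open>Since cross adjacencies form a matching, some linked pair is non-adjacent crosswise to all
  the others, so each of them forces it in one step.\<close>

lemma linked_pairs_hub:
  assumes rg: "reflexive_graph V E" and av: "edge_avoids E (x, y) (q, q')"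
  obtains ha hb where "ha \<in> {x, y}" "hb \<in> {q, q'}"
    "\<And>a b. (a, b) \<in> linked_pairs E {x, y} {q, q'} \<Longrightarrow> (a, b) = (ha, hb) \<or> \<not> E a hb \<and> \<not> E b ha"
proof -
  have sym: "E a b \<longleftrightarrow> E b a" for a b using reflexive_graph_sym[OF rg] by blast
  have disj: "{x, y} \<inter> {q, q'} = {}" using av by (simp add: edge_avoids_def)
  note cross = edge_avoids_cross_adjacency[OF rg av]
  consider "E x q" | "\<not> E x q" "E y q'" | "\<not> E x q" "\<not> E y q'" "E x q'"
    | "\<not> E x q" "\<not> E y q'" "\<not> E x q'"
    by blast
  then show thesis
  proof cases
    case 1
    show thesis
      by (rule that[of y q']) (use 1 cross disj sym in \<open>auto simp: linked_pairs_def only_nbr_in_def\<close>)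
  next
    case 2
    show thesis
      by (rule that[of x q]) (use 2 cross disj sym in \<open>auto simp: linked_pairs_def only_nbr_in_def\<close>)
  next
    case 3
    show thesis
      by (rule that[of y q]) (use 3 cross disj sym in \<open>auto simp: linked_pairs_def only_nbr_in_def\<close>)
  next
    case 4
    show thesis
      by (rule that[of x q']) (use 4 cross disj sym in \<open>auto simp: linked_pairs_def only_nbr_in_def\<close>)
  qed
qed

lemma linked_pairs_connected:
  assumes rg: "reflexive_graph V E" and av: "edge_avoids E (x, y) (q, q')"
    and p: "p \<in> linked_pairs E {x, y} {q, q'}" and p': "p' \<in> linked_pairs E {x, y} {q, q'}"
  shows "(p, p') \<in> (forcing V E)\<^sup>*"
proof -
  obtain ha hb where h: "ha \<in> {x, y}" "hb \<in> {q, q'}"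
    and hub: "\<And>a b. (a, b) \<in> linked_pairs E {x, y} {q, q'} \<Longrightarrow> (a, b) = (ha, hb) \<or> \<not> E a hb \<and> \<not> E b ha"
    using linked_pairs_hub[OF rg av] by blast
  have edges: "E x y" "E q q'" and disj: "{x, y} \<inter> {q, q'} = {}"
    using av by (auto simp: edge_avoids_def)
  have to_hub: "(r, (ha, hb)) \<in> (forcing V E)\<^sup>*" if linked: "r \<in> linked_pairs E {x, y} {q, q'}" for r
  proof -
    obtain a b where r: "r = (a, b)" "a \<in> {x, y}" "b \<in> {q, q'}"
      using linked linked_pairs_subset by blast
    show ?thesis
      using hub[of a b] linked r forcing_between_edges[OF rg edges disj r(2) h(1) r(3) h(2)] by auto
  qed
  show ?thesis
    using to_hub[OF p] rtrancl_forcing_sym[OF rg to_hub[OF p']] by (rule rtrancl_trans)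
qed

lemma only_nbr_in_exists:
  assumes rg: "reflexive_graph V E" and av: "edge_avoids E (x, y) (q, q')" and b: "b \<in> {q, q'}"
  shows "\<exists>a. only_nbr_in E {x, y} a b"
proof -
  have "\<not> (E x b \<and> E y b)" using edge_avoids_cross_adjacency[OF rg av] b by auto
  then show ?thesis
    by (cases "E y b") (auto simp: only_nbr_in_def intro: exI[of _ x] exI[of _ y])
qed

lemma avoided_walk_pairs_connected:
  assumes rg: "reflexive_graph V E" and w: "is_walk V E w" and av: "edge_avoids_walk E (x, y) w"
    and j: "j < length w" "j' < length w"
    and a: "only_nbr_in E {x, y} a (w ! j)" "only_nbr_in E {x, y} a' (w ! j')"
  shows "((a, w ! j), (a', w ! j')) \<in> (forcing V E)\<^sup>*"
proof -
  have step: "((a, w ! l), (a', w ! l')) \<in> (forcing V E)\<^sup>*"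
    if "Suc i < length w" "l \<in> {i, Suc i}" "l' \<in> {i, Suc i}"
      "only_nbr_in E {x, y} a (w ! l)" "only_nbr_in E {x, y} a' (w ! l')" for i l l' a a'
    using that linked_pairs_connected[OF rg edge_avoids_walk_nth[OF av that(1)]]
    by (auto simp: linked_pairs_def)
  have nbr_exists: "\<exists>a. only_nbr_in E {x, y} a (w ! i)" if "i < length w" for i
  proof (cases "Suc i < length w")
    case True
    then show ?thesis using only_nbr_in_exists[OF rg edge_avoids_walk_nth[OF av True]] by simp
  next
    case False
    then have "Suc (i - 1) < length w" "w ! Suc (i - 1) = w ! i"
      using that w by (auto simp: is_walk_def Suc_diff_1)
    then show ?thesis using only_nbr_in_exists[OF rg edge_avoids_walk_nth[OF av]] by force
  qed
  have "0 < length w" using w by (auto simp: is_walk_def)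
  then obtain a0 where a0: "only_nbr_in E {x, y} a0 (w ! 0)"
    using nbr_exists by blast
  have from_start: "((a0, w ! 0), (a, w ! i)) \<in> (forcing V E)\<^sup>*"
    if "i < length w" "only_nbr_in E {x, y} a (w ! i)" for i a
    using that
  proof (induction i arbitrary: a)
    case 0
    have "Suc 0 < length w" using w by (simp add: is_walk_def)
    then show ?case using step[of 0 0 0 a0 a] a0 0 by simp
  next
    case (Suc i)
    obtain a'' where a'': "only_nbr_in E {x, y} a'' (w ! i)" using nbr_exists Suc.prems(1) by force
    show ?case
      using Suc.IH[OF _ a''] Suc.prems step[of i i "Suc i" a'' a] a'' by (auto intro: rtrancl_trans)
  qed
  show ?thesis
    using rtrancl_forcing_sym[OF rg from_start[OF j(1) a(1)]] from_start[OF j(2) a(2)]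
    by (rule rtrancl_trans)
qed

lemma avoided_walk_start_to_end:
  assumes rg: "reflexive_graph V E" and w: "is_walk V E w" and av: "edge_avoids_walk E (x, y) w"
    and b: "b \<in> {w ! 0, w ! 1}" "only_nbr_in E {x, y} a b"
    and c: "c \<in> {x, y}" "only_nbr_in E {w ! (length w - 2), w ! (length w - 1)} d c"
  shows "((a, b), (c, d)) \<in> (forcing V E)\<^sup>*"
proof -
  define l where "l = length w - 2"
  have l: "Suc l < length w" "Suc l = length w - 1" "1 < length w"
    using w by (auto simp: l_def is_walk_def)
  have last_edge: "edge_avoids E (x, y) (w ! l, w ! Suc l)"
    using edge_avoids_walk_nth[OF av l(1)] .
  obtain a' where a': "only_nbr_in E {x, y} a' (w ! l)"
    using only_nbr_in_exists[OF rg last_edge] by blast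
  obtain j where "j < length w" "b = w ! j"
    using b(1) l(3) by (metis insertE less_trans singletonD zero_less_one)
  then have "((a, b), (a', w ! l)) \<in> (forcing V E)\<^sup>*"
    using avoided_walk_pairs_connected[OF rg w av _ _ _ a'] b(2) l(1) by simp
  moreover have "((a', w ! l), (c, d)) \<in> (forcing V E)\<^sup>*"
    using linked_pairs_connected[OF rg last_edge] a' c l by (auto simp: linked_pairs_def l_def)
  ultimately show ?thesis by (rule rtrancl_trans)
qed

lemma rtrancl_swap_odd_cycle:
  assumes swap: "\<And>p q. (p, q) \<in> R\<^sup>* \<Longrightarrow> (prod.swap p, prod.swap q) \<in> R\<^sup>*"
    and step: "\<And>i. i \<in> I \<Longrightarrow> (Q i, prod.swap (Q (\<sigma> i))) \<in> R\<^sup>*"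
    and closed: "\<And>i. i \<in> I \<Longrightarrow> \<sigma> i \<in> I"
    and i: "i \<in> I" and cycle: "(\<sigma> ^^ n) i = i" and "odd n"
  shows "(Q i, prod.swap (Q i)) \<in> R\<^sup>*"
proof -
  have "(\<sigma> ^^ j) i \<in> I \<and>
      (Q i, (if even j then Q ((\<sigma> ^^ j) i) else prod.swap (Q ((\<sigma> ^^ j) i)))) \<in> R\<^sup>*" for j
  proof (induction j)
    case (Suc j)
    let ?k = "(\<sigma> ^^ j) i"
    have fwd: "(Q ?k, prod.swap (Q (\<sigma> ?k))) \<in> R\<^sup>*"
      using step Suc by simp
    have bwd: "(prod.swap (Q ?k), Q (\<sigma> ?k)) \<in> R\<^sup>*"
      using swap[OF fwd] by simp
    show ?case
      using Suc closed fwd bwd by (auto intro: rtrancl_trans)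
  qed (simp add: i)
  then show ?thesis using cycle \<open>odd n\<close> by metis
qed

lemma rotation_funpow:
  "((\<lambda>i. (i + r) mod N) ^^ n) 0 = (n * r) mod (N :: nat)"
  by (induction n) (simp_all add: mod_add_right_eq add.commute)

lemma avoided_walk_first_pair:
  assumes rg: "reflexive_graph V E" and w: "is_walk V E w" and av: "edge_avoids_walk E (x, y) w"
  shows "\<exists>a. (a, w ! 0) \<in> Zset V \<and> only_nbr_in E {x, y} a (w ! 0)"
proof -
  have "Suc 0 < length w" using w by (simp add: is_walk_def)
  then have first: "edge_avoids E (x, y) (w ! 0, w ! 1)"
    using edge_avoids_walk_nth[OF av] by simp
  obtain a where a: "only_nbr_in E {x, y} a (w ! 0)"
    using only_nbr_in_exists[OF rg first] by blast
  have "E x y" "E (w ! 0) (w ! 1)" "{x, y} \<inter> {w ! 0, w ! 1} = {}"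
    using first by (auto simp: edge_avoids_def)
  then have "(a, w ! 0) \<in> Zset V"
    using a reflexive_graph_edge_vertices[OF rg] by (auto simp: Zset_def only_nbr_in_def)
  then show ?thesis using a by blast
qed

lemma rotation_inverse:
  "i < 2 * k + 1 \<Longrightarrow> ((i + (k + 1)) mod (2 * k + 1) + k) mod (2 * k + 1) = (i :: nat)"
proof -
  assume i: "i < 2 * k + 1"
  have "((i + (k + 1)) mod (2 * k + 1) + k) mod (2 * k + 1) = (i + (k + 1) + k) mod (2 * k + 1)"
    by (rule mod_add_left_eq)
  also have "\<dots> = (i + (2 * k + 1)) mod (2 * k + 1)" by (simp add: mult_2 add.assoc)
  also have "\<dots> = i" using i by (simp only: mod_add_self2 mod_less)
  finally show ?thesis .
qed

lemma weak_edge_asteroid_imp_invertible_pair: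
  assumes rg: "reflexive_graph V E" and ast: "weak_edge_asteroid V E k x y"
  shows "has_invertible_pair V E"
proof -
  define N where "N = 2 * k + 1"
  define A where "A i = (i + k) mod N" for i
  define B where "B i = (i + (k + 1)) mod N" for i
  have walk: "\<exists>w. is_walk V E w \<and> {w ! 0, w ! 1} = {x (A i), y (A i)} \<and>
      {w ! (length w - 2), w ! (length w - 1)} = {x (B i), y (B i)} \<and> edge_avoids_walk E (x i, y i) w"
    if "i < N" for i
    using ast that by (auto simp: weak_edge_asteroid_def N_def A_def B_def add.assoc)
  have AB: "A (B i) = i" if "i < N" for i
    using rotation_inverse that by (simp add: A_def B_def N_def)
  have "\<exists>p. p \<in> Zset V \<and> snd p \<in> {x (A i), y (A i)} \<and> only_nbr_in E {x i, y i} (fst p) (snd p)"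
    if i: "i < N" for i
  proof -
    obtain w where w: "is_walk V E w" "{w ! 0, w ! 1} = {x (A i), y (A i)}"
      and av: "edge_avoids_walk E (x i, y i) w"
      using walk[OF i] by blast
    then show ?thesis
      using avoided_walk_first_pair[OF rg w(1) av] by auto
  qed
  then obtain Q where Q: "\<And>i. i < N \<Longrightarrow> Q i \<in> Zset V \<and> snd (Q i) \<in> {x (A i), y (A i)} \<and>
      only_nbr_in E {x i, y i} (fst (Q i)) (snd (Q i))"
    by metis
  have B_N: "B i < N" for i by (simp add: B_def N_def)
  have step: "(Q i, prod.swap (Q (B i))) \<in> (forcing V E)\<^sup>*" if i: "i < N" for i
  proof -
    obtain w where w: "is_walk V E w" "{w ! 0, w ! 1} = {x (A i), y (A i)}"
      "{w ! (length w - 2), w ! (length w - 1)} = {x (B i), y (B i)}"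
      and av: "edge_avoids_walk E (x i, y i) w"
      using walk[OF i] by blast
    obtain a b c d where ab: "Q i = (a, b)" and dc: "Q (B i) = (d, c)" by fastforce
    have "b \<in> {w ! 0, w ! 1}" "only_nbr_in E {x i, y i} a b"
      using Q[OF i] ab w(2) by auto
    moreover have "c \<in> {x i, y i}" "only_nbr_in E {w ! (length w - 2), w ! (length w - 1)} d c"
      using Q[OF B_N[of i]] dc AB[OF i] w(3) by auto
    ultimately show ?thesis
      using avoided_walk_start_to_end[OF rg w(1) av] ab dc by simp
  qed
  have cycle: "(B ^^ N) 0 = 0"
  proof -
    have "(B ^^ N) 0 = (N * (k + 1)) mod N"
      unfolding B_def[abs_def] by (rule rotation_funpow)
    then show ?thesis by simp
  qed
  have inverted: "(Q 0, prod.swap (Q 0)) \<in> (forcing V E)\<^sup>*"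
    by (rule rtrancl_swap_odd_cycle[where I = "{..<N}" and \<sigma> = B and n = N])
      (use rtrancl_forcing_swap step B_N cycle in \<open>auto simp: N_def\<close>)
  obtain u v where uv: "Q 0 = (u, v)" by fastforce
  have Z: "(u, v) \<in> Zset V" using Q[of 0] uv by (simp add: N_def)
  have "pair_sim V E (u, v) (v, u)"
    using pair_sim_iff_rtrancl_forcing[OF rg Z] inverted uv by simp
  then show ?thesis using Z by (auto simp: has_invertible_pair_def Zset_def)
qed

theorem theorem6:
  fixes V :: "'a set" and E :: "'a \<Rightarrow> 'a \<Rightarrow> bool"
  assumes "finite V" and "reflexive_graph V E"
  shows "has_invertible_pair V E \<longleftrightarrow> has_weak_edge_asteroid V E"
  using invertible_pair_imp_weak_edge_asteroid[OF assms(2)]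
    weak_edge_asteroid_imp_invertible_pair[OF assms(2)]
  unfolding has_weak_edge_asteroid_def by blast

end
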